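(* If $\alpha=1$ and $\beta\in[0,1]$, then $\{k^2+\alpha k+\beta\}_{k=0}^{\infty}$ is a Legendre multiplier sequence.
   Context: The Legendre polynomials $\mathfrak{Le}_n(x)$ are defined by $\frac{1}{\sqrt{1-2xt+t^2}}=\sum_{k=0}^{\infty}\mathfrak{Le}_k(x)t^k$. A real sequence $\{\gamma_k\}_{k=0}^{\infty}$ is a Legendre multiplier sequence if, for every $n$ and all real $a_0,\dots,a_n$, the polynomial $\sum_{k=0}^n a_k\gamma_k\mathfrak{Le}_k(x)$ has only real zeros whenever $\sum_{k=0}^n a_k\mathfrak{Le}_k(x)$ has only real zeros. *)

theory Defs
  imports "HOL-Computational_Algebra.Polynomial" Complex_Main
begin

text \<open>Legendre polynomials, generated by 1/sqrt(1-2xt+t^2) = sum Le_k(x) t^k,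
  realised via Bonnet's recurrence
  (n+1) Le_(n+1) = (2n+1) x Le_n - n Le_(n-1), Le_0 = 1, Le_1 = x.\<close>
fun legendre :: "nat \<Rightarrow> real poly" where
  "legendre 0 = 1"
| "legendre (Suc 0) = [:0, 1:]"
| "legendre (Suc (Suc n)) =
     smult (1 / real (n + 2))
       (smult (real (2 * n + 3)) ([:0, 1:] * legendre (Suc n))
        - smult (real (n + 1)) (legendre n))"

text \<open>A real polynomial has only real zeros (the zero polynomial counts, by the
  usual convention of the multiplier-sequence literature).\<close>
definition only_real_zeros :: "real poly \<Rightarrow> bool" where
  "only_real_zeros p \<longleftrightarrow>
     p = 0 \<or> (\<forall>z::complex. poly (map_poly complex_of_real p) z = 0 \<longrightarrow> Im z = 0)"

definition legendre_multiplier_sequence :: "(nat \<Rightarrow> real) \<Rightarrow> bool" where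
  "legendre_multiplier_sequence \<gamma> \<longleftrightarrow>
     (\<forall>(n::nat) (a::nat \<Rightarrow> real).
        only_real_zeros (\<Sum>k\<le>n. smult (a k) (legendre k)) \<longrightarrow>
        only_real_zeros (\<Sum>k\<le>n. smult (a k * \<gamma> k) (legendre k)))"

end

theory Submission
  imports Defs "HOL-Computational_Algebra.Fundamental_Theorem_Algebra"
begin

text \<open>Legendre's differential equation makes the Legendre polynomials eigenfunctions of
  \<open>T p = ((x\<^sup>2 - 1) p')' + \<beta> p\<close> with eigenvalues \<open>k\<^sup>2 + k + \<beta>\<close>, so it suffices to show that
  \<open>T\<close> preserves real-rootedness. Fix \<open>z\<close> in the open upper half-plane and split
  \<open>(z\<^sup>2 - 1) s\<^sup>2 + 2 z s + \<beta> = (z\<^sup>2 - 1)(s - s\<^sub>1)(s - s\<^sub>2)\<close>; for \<open>0 \<le> \<beta> \<le> 1\<close> both roots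
  have \<open>Im s\<^sub>i \<ge> 0\<close>. Then \<open>(T p)(z) = (z\<^sup>2 - 1)(q' - s\<^sub>2 q)(z)\<close> with \<open>q = p' - s\<^sub>1 p\<close>.
  Since the logarithmic derivative of a polynomial with all zeros in the closed lower
  half-plane has negative imaginary part in the upper half-plane, each operator
  \<open>f \<mapsto> f' - s f\<close> with \<open>Im s \<ge> 0\<close> keeps all zeros in the closed lower half-plane and
  leaves no zero at \<open>z\<close>. So \<open>T p\<close> has no zeros in the upper half-plane, and being real,
  none in the lower one either.\<close>

lemma smult_of_nat_poly: "smult (real n) p = of_nat n * p"
  by (simp add: of_nat_poly)

lemma legendre_Suc_Suc:
  "(of_nat n + 2) * legendre (Suc (Suc n)) =
     (2 * of_nat n + 3) * ([:0, 1:] * legendre (Suc n)) - (of_nat n + 1) * legendre n"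
proof -
  have "smult (real (n + 2)) (legendre (Suc (Suc n))) =
      smult (real (2 * n + 3)) ([:0, 1:] * legendre (Suc n)) - smult (real (n + 1)) (legendre n)"
    by (simp del: mult_pCons_left)
  then show ?thesis
    by (simp only: smult_of_nat_poly) (simp add: algebra_simps)
qed

lemma of_nat_add_2_poly_cancel:
  "(of_nat n + 2) * p = (of_nat n + 2) * (q :: real poly) \<Longrightarrow> p = q"
proof -
  have "(of_nat n + 2 :: real poly) = of_nat (n + 2)"
    by simp
  also have "\<dots> \<noteq> 0"
    by (simp only: of_nat_poly) simp
  finally show "(of_nat n + 2) * p = (of_nat n + 2) * q \<Longrightarrow> p = q"
    by simp
qed

lemma legendre_pderiv_identities:
  "pderiv (legendre (Suc n)) - [:0, 1:] * pderiv (legendre n) = (of_nat n + 1) * legendre n \<and>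
   [:0, 1:] * pderiv (legendre (Suc n)) - pderiv (legendre n) = (of_nat n + 1) * legendre (Suc n)"
proof (induction n)
  case 0
  then show ?case by (simp add: pderiv_pCons)
next
  case (Suc n)
  define x where "x = [:0, 1 :: real:]"
  define N where "N = (of_nat n :: real poly)"
  define P Q R where "P = legendre n" and "Q = legendre (Suc n)" and "R = legendre (Suc (Suc n))"
  have rec: "(N + 2) * R = (2 * N + 3) * (x * Q) - (N + 1) * P"
    unfolding x_def N_def P_def Q_def R_def by (rule legendre_Suc_Suc)
  have dN: "pderiv N = 0" and dx: "pderiv x = 1"
    by (simp_all add: N_def x_def pderiv_pCons)
  have "pderiv ((N + 2) * R) = pderiv ((2 * N + 3) * (x * Q) - (N + 1) * P)"
    using rec by simp
  then have rec': "(N + 2) * pderiv R = (2 * N + 3) * (Q + x * pderiv Q) - (N + 1) * pderiv P"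
    by (simp add: dN dx pderiv_mult pderiv_add pderiv_diff algebra_simps)
  have IH1: "pderiv Q - x * pderiv P = (N + 1) * P"
   and IH2: "x * pderiv Q - pderiv P = (N + 1) * Q"
    using Suc unfolding x_def N_def P_def Q_def by simp_all
  have "(N + 2) * (pderiv R - x * pderiv Q) = (N + 2) * ((N + 2) * Q)"
    using rec' IH2 by algebra
  then have A: "pderiv R - x * pderiv Q = (N + 2) * Q"
    unfolding N_def by (rule of_nat_add_2_poly_cancel)
  have "(x * x - 1) * pderiv Q = (N + 1) * (x * Q - P)"
    using IH1 IH2 by algebra
  then have "(N + 2) * (x * pderiv R - pderiv Q) = (N + 2) * ((N + 2) * R)"
    using A rec by algebra
  then have B: "x * pderiv R - pderiv Q = (N + 2) * R"
    unfolding N_def by (rule of_nat_add_2_poly_cancel)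
  show ?case
    using A B unfolding x_def N_def P_def Q_def R_def by (simp add: algebra_simps)
qed

lemma legendre_ode:
  "pderiv ([:-1, 0, 1:] * pderiv (legendre n)) = of_nat n * (of_nat n + 1) * legendre n"
proof (cases n)
  case (Suc m)
  define x where "x = [:0, 1 :: real:]"
  define M where "M = (of_nat m :: real poly)"
  define P Q where "P = legendre m" and "Q = legendre (Suc m)"
  have IH1: "pderiv Q - x * pderiv P = (M + 1) * P"
   and IH2: "x * pderiv Q - pderiv P = (M + 1) * Q"
    using legendre_pderiv_identities[of m] unfolding x_def M_def P_def Q_def by simp_all
  have dM: "pderiv M = 0" and dx: "pderiv x = 1"
    by (simp_all add: M_def x_def pderiv_pCons)
  have "[:-1, 0, 1:] = x * x - 1"
    by (simp add: x_def one_pCons)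
  moreover have "(x * x - 1) * pderiv Q = (M + 1) * (x * Q - P)"
    using IH1 IH2 by algebra
  moreover have "pderiv ((M + 1) * (x * Q - P)) = (M + 1) * (Q + x * pderiv Q - pderiv P)"
    by (simp add: dM dx pderiv_mult pderiv_add pderiv_diff algebra_simps)
  ultimately have "pderiv ([:-1, 0, 1:] * pderiv Q) = (M + 1) * (Q + x * pderiv Q - pderiv P)"
    by simp
  also have "\<dots> = (M + 1) * (M + 2) * Q"
    using IH2 by algebra
  finally show ?thesis
    using Suc unfolding Q_def M_def by (simp add: algebra_simps)
qed simp

definition legendre_op :: "real \<Rightarrow> real poly \<Rightarrow> real poly" where
  "legendre_op \<beta> p = pderiv ([:-1, 0, 1:] * pderiv p) + smult \<beta> p"

lemma legendre_op_add: "legendre_op \<beta> (p + q) = legendre_op \<beta> p + legendre_op \<beta> q"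
  by (simp add: legendre_op_def pderiv_add distrib_left smult_add_right)

lemma legendre_op_smult: "legendre_op \<beta> (smult c p) = smult c (legendre_op \<beta> p)"
  unfolding legendre_op_def pderiv_smult mult_smult_right smult_add_right smult_smult
  by (simp only: mult.commute)

lemma legendre_op_legendre:
  "legendre_op \<beta> (legendre k) = smult (real k ^ 2 + real k + \<beta>) (legendre k)"
  unfolding legendre_op_def legendre_ode
  by (simp add: of_nat_poly smult_add_left power2_eq_square algebra_simps)

lemma legendre_op_sum_legendre:
  "legendre_op \<beta> (\<Sum>k\<le>n. smult (a k) (legendre k)) =
     (\<Sum>k\<le>n. smult (a k * (real k ^ 2 + real k + \<beta>)) (legendre k))"
  by (induction n) (simp_all add: legendre_op_add legendre_op_smult legendre_op_legendre
      del: legendre.simps)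

lemma map_poly_of_real_add:
  "map_poly of_real (p + q) = (map_poly of_real p + map_poly of_real q :: 'a::real_field poly)"
  by (intro poly_eqI) (simp add: coeff_map_poly)

lemma map_poly_of_real_mult:
  "map_poly of_real (p * q) = (map_poly of_real p * map_poly of_real q :: 'a::real_field poly)"
  by (intro poly_eqI) (simp add: coeff_map_poly coeff_mult)

lemma map_poly_of_real_smult:
  "map_poly of_real (smult c p) = (smult (of_real c) (map_poly of_real p) :: 'a::real_field poly)"
  by (intro poly_eqI) (simp add: coeff_map_poly)

lemma map_poly_of_real_pderiv:
  "map_poly of_real (pderiv p) = (pderiv (map_poly of_real p) :: 'a::real_field poly)"
  by (intro poly_eqI) (simp add: coeff_map_poly coeff_pderiv)

lemma poly_map_poly_of_real_legendre_op:
  fixes p :: "real poly" and z :: complex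
  defines "q \<equiv> map_poly of_real p"
  shows "poly (map_poly of_real (legendre_op \<beta> p)) z =
    (z\<^sup>2 - 1) * poly (pderiv (pderiv q)) z + 2 * z * poly (pderiv q) z + of_real \<beta> * poly q z"
proof -
  have "pderiv [:-1, 0, 1 :: real:] = [:0, 2:]"
    by (simp add: pderiv_pCons)
  then have expand: "legendre_op \<beta> p =
      [:-1, 0, 1:] * pderiv (pderiv p) + [:0, 2:] * pderiv p + smult \<beta> p"
    unfolding legendre_op_def pderiv_mult by (simp add: algebra_simps)
  show ?thesis
    unfolding expand q_def map_poly_of_real_add map_poly_of_real_mult map_poly_of_real_smult
      map_poly_of_real_pderiv
    by (simp add: map_poly_pCons algebra_simps power2_eq_square)
qed

definition lower_rooted :: "complex poly \<Rightarrow> bool" where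
  "lower_rooted q \<longleftrightarrow> q \<noteq> 0 \<and> (\<forall>r. poly q r = 0 \<longrightarrow> Im r \<le> 0)"

lemma lower_rooted_poly_neq_0: "lower_rooted q \<Longrightarrow> 0 < Im y \<Longrightarrow> poly q y \<noteq> 0"
  by (auto simp: lower_rooted_def)

lemma Im_divide_1_neg: "0 < Im w \<Longrightarrow> Im (1 / w) < 0"
proof -
  assume "0 < Im w"
  moreover from this have "0 < (Re w)\<^sup>2 + (Im w)\<^sup>2"
    by (simp add: add_nonneg_pos)
  ultimately show ?thesis
    by (simp add: Im_divide divide_neg_pos)
qed

lemma lower_rooted_logderiv_Im:
  assumes "lower_rooted q" "0 < Im y"
  shows "Im (poly (pderiv q) y / poly q y) \<le> 0 \<and>
         (0 < degree q \<longrightarrow> Im (poly (pderiv q) y / poly q y) < 0)"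
  using assms
proof (induction "degree q" arbitrary: q)
  case 0
  then have "pderiv q = 0"
    by (simp add: pderiv_eq_0_iff)
  then show ?case
    using 0 by simp
next
  case (Suc d)
  then have "\<not> constant (poly q)"
    by (metis constant_degree nat.distinct(1))
  then obtain r where "poly q r = 0"
    using fundamental_theorem_of_algebra by blast
  then obtain q0 where q: "q = [:-r, 1:] * q0"
    using poly_eq_0_iff_dvd by (metis dvdE)
  have "q0 \<noteq> 0" "Im r \<le> 0"
    using Suc.prems(1) \<open>poly q r = 0\<close> q by (auto simp: lower_rooted_def)
  then have "degree q = degree [:-r, 1:] + degree q0"
    unfolding q by (intro degree_mult_eq) auto
  then have "d = degree q0"
    using Suc.hyps(2) by simp
  moreover have "lower_rooted q0"
    using Suc.prems(1) q \<open>q0 \<noteq> 0\<close> by (auto simp: lower_rooted_def)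
  ultimately have IH: "Im (poly (pderiv q0) y / poly q0 y) \<le> 0"
    using Suc.hyps(1) Suc.prems(2) by blast
  have "poly q0 y \<noteq> 0"
    using \<open>lower_rooted q0\<close> Suc.prems(2) by (rule lower_rooted_poly_neq_0)
  have "0 < Im (y - r)"
    using \<open>Im r \<le> 0\<close> Suc.prems(2) by simp
  have "poly (pderiv q) y =
      poly [:-r, 1:] y * poly (pderiv q0) y + poly q0 y * poly (pderiv [:-r, 1:]) y"
    unfolding q pderiv_mult poly_add poly_mult ..
  then have dq: "poly (pderiv q) y = poly q0 y + (y - r) * poly (pderiv q0) y"
    by (simp add: pderiv_pCons algebra_simps)
  have "poly q y = (y - r) * poly q0 y"
    unfolding q by (simp add: algebra_simps)
  moreover have "y - r \<noteq> 0"
    using \<open>0 < Im (y - r)\<close> by auto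
  ultimately have "poly (pderiv q) y / poly q y = 1 / (y - r) + poly (pderiv q0) y / poly q0 y"
    unfolding dq using \<open>poly q0 y \<noteq> 0\<close> by (simp add: field_simps)
  moreover have "Im (1 / (y - r)) < 0"
    using \<open>0 < Im (y - r)\<close> by (rule Im_divide_1_neg)
  ultimately show ?case
    using IH by simp
qed

lemma lower_rooted_pderiv_eq_scaled:
  assumes "lower_rooted q" "0 \<le> Im s" "0 < Im y" "poly (pderiv q) y = s * poly q y"
  shows "s = 0 \<and> degree q = 0"
proof -
  have "poly q y \<noteq> 0"
    using assms(1,3) by (rule lower_rooted_poly_neq_0)
  then have "poly (pderiv q) y / poly q y = s"
    using assms(4) by simp
  then have "degree q = 0"
    using lower_rooted_logderiv_Im[OF assms(1,3)] assms(2) by fastforce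
  then have "pderiv q = 0"
    by (simp add: pderiv_eq_0_iff)
  then show ?thesis
    using assms(4) \<open>poly q y \<noteq> 0\<close> \<open>degree q = 0\<close> by simp
qed

lemma lower_rooted_pderiv_minus_smult:
  assumes "lower_rooted q" "0 \<le> Im s" "\<not> (s = 0 \<and> degree q = 0)"
  shows "lower_rooted (pderiv q - smult s q)"
  unfolding lower_rooted_def
proof (intro conjI allI impI)
  have "poly (pderiv q) \<i> \<noteq> s * poly q \<i>"
    using lower_rooted_pderiv_eq_scaled[OF assms(1,2), of \<i>] assms(3) by auto
  then show "pderiv q - smult s q \<noteq> 0"
    by (metis eq_iff_diff_eq_0 poly_0 poly_diff poly_smult)
next
  fix r
  assume "poly (pderiv q - smult s q) r = 0"
  then show "Im r \<le> 0"
    using lower_rooted_pderiv_eq_scaled[OF assms(1,2), of r] assms(3) by force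
qed

lemma degree_pderiv_minus_smult:
  fixes q :: "'a::field_char_0 poly"
  assumes "s \<noteq> 0"
  shows "degree (pderiv q - smult s q) = degree q"
proof (rule antisym)
  show "degree (pderiv q - smult s q) \<le> degree q"
    by (intro degree_diff_le) (simp_all add: degree_pderiv degree_smult_le)
next
  have "coeff (pderiv q - smult s q) (degree q) = - s * lead_coeff q"
    by (simp add: coeff_pderiv coeff_eq_0)
  then show "degree q \<le> degree (pderiv q - smult s q)"
    using assms by (cases "q = 0") (auto intro: le_degree)
qed

lemma Im_pos_mult_neq_1: "0 < Im a \<Longrightarrow> 0 < Im b \<Longrightarrow> a * b \<noteq> 1"
  by (metis Im_divide_1_neg divide_eq_eq less_asym mult.commute mult_not_zero zero_neq_one)

lemma quadratic_root_Im_nonneg: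
  fixes z s :: complex and \<beta> :: real
  assumes "0 < Im z" "0 \<le> \<beta>" "\<beta> \<le> 1" "(z\<^sup>2 - 1) * s\<^sup>2 + 2 * z * s + of_real \<beta> = 0"
  shows "0 \<le> Im s"
proof (rule ccontr)
  assume "\<not> 0 \<le> Im s"
  define u where "u = 1 / s"
  have "s \<noteq> 0" and "0 < Im u"
    using \<open>\<not> 0 \<le> Im s\<close> Im_divide_1_neg[of "- s"] by (auto simp: u_def)
  define g where "g = sqrt (1 - \<beta>)"
  have "0 \<le> g" "g \<le> 1" "g\<^sup>2 = 1 - \<beta>"
    using assms(2,3) by (simp_all add: g_def real_sqrt_le_1_iff)
  \<comment> \<open>With \<open>u = 1/s\<close> the equation factors into two factors lying in the upper half-plane.\<close>
  have "z\<^sup>2 - 1 + 2 * z * u + of_real \<beta> * u\<^sup>2 = ((z\<^sup>2 - 1) * s\<^sup>2 + 2 * z * s + of_real \<beta>) / s\<^sup>2"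
    using \<open>s \<noteq> 0\<close> by (simp add: u_def field_simps power2_eq_square)
  then have "z\<^sup>2 - 1 + 2 * z * u + of_real (1 - g\<^sup>2) * u\<^sup>2 = 0"
    using assms(4) \<open>g\<^sup>2 = 1 - \<beta>\<close> by simp
  then have "(z + of_real (1 - g) * u) * (z + of_real (1 + g) * u) = 1"
    by (simp add: algebra_simps power2_eq_square)
  moreover have "0 < Im (z + of_real (1 - g) * u)" "0 < Im (z + of_real (1 + g) * u)"
    using assms(1) \<open>0 < Im u\<close> \<open>0 \<le> g\<close> \<open>g \<le> 1\<close>
    by (simp_all add: add_pos_nonneg add_pos_pos)
  ultimately show False
    using Im_pos_mult_neq_1 by blast
qed

lemma complex_quadratic_vieta:
  fixes a b c :: complex
  assumes "a \<noteq> 0"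
  obtains s1 s2 where "a * (s1 + s2) = - b" "a * (s1 * s2) = c"
proof
  define w where "w = csqrt (b\<^sup>2 - 4 * a * c)"
  show "a * ((- b + w) / (2 * a) + (- b - w) / (2 * a)) = - b"
    using assms by (simp add: field_simps)
  have "w\<^sup>2 = b\<^sup>2 - 4 * a * c"
    by (simp add: w_def)
  then have "(- b + w) * (- b - w) = 4 * a * c"
    by (simp add: algebra_simps power2_eq_square)
  then show "a * ((- b + w) / (2 * a) * ((- b - w) / (2 * a))) = c"
    using assms by (simp add: field_simps)
qed

lemma poly_legendre_op_factor:
  fixes p :: "real poly" and z s1 s2 :: complex
  defines "q \<equiv> map_poly of_real p"
  assumes "(z\<^sup>2 - 1) * (s1 + s2) = - (2 * z)" "(z\<^sup>2 - 1) * (s1 * s2) = of_real \<beta>"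
  shows "poly (map_poly of_real (legendre_op \<beta> p)) z =
    (z\<^sup>2 - 1) * (poly (pderiv (pderiv q - smult s1 q)) z - s2 * poly (pderiv q - smult s1 q) z)"
proof -
  have "(z\<^sup>2 - 1) * (poly (pderiv (pderiv q - smult s1 q)) z - s2 * poly (pderiv q - smult s1 q) z) =
      (z\<^sup>2 - 1) * poly (pderiv (pderiv q)) z - (z\<^sup>2 - 1) * (s1 + s2) * poly (pderiv q) z
      + (z\<^sup>2 - 1) * (s1 * s2) * poly q z"
    by (simp add: pderiv_diff pderiv_smult algebra_simps)
  then show ?thesis
    unfolding poly_map_poly_of_real_legendre_op q_def using assms(2,3) by simp
qed

lemma poly_legendre_op_neq_0_upper:
  fixes p :: "real poly" and z :: complex
  assumes "only_real_zeros p" "0 \<le> \<beta>" "\<beta> \<le> 1" "legendre_op \<beta> p \<noteq> 0" "0 < Im z"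
  shows "poly (map_poly of_real (legendre_op \<beta> p)) z \<noteq> 0"
proof (cases "degree p = 0")
  case True
  then obtain c where "p = [:c:]"
    by (metis degree_eq_zeroE)
  then show ?thesis
    using assms(4) by (simp add: legendre_op_def map_poly_pCons)
next
  case False
  define q where "q = map_poly complex_of_real p"
  have "lower_rooted q" "0 < degree q"
    using assms(1) False
    by (auto simp: q_def lower_rooted_def only_real_zeros_def degree_map_poly map_poly_eq_0_iff)
  have "z\<^sup>2 - 1 \<noteq> 0"
    using assms(5) by (auto simp: power2_eq_1_iff)
  then obtain s1 s2
    where sum: "(z\<^sup>2 - 1) * (s1 + s2) = - (2 * z)" and prod: "(z\<^sup>2 - 1) * (s1 * s2) = of_real \<beta>"
    by (rule complex_quadratic_vieta)
  have "(z\<^sup>2 - 1) * s1\<^sup>2 + 2 * z * s1 + of_real \<beta> = 0"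
    and "(z\<^sup>2 - 1) * s2\<^sup>2 + 2 * z * s2 + of_real \<beta> = 0"
    unfolding prod[symmetric] using sum by algebra+
  then have "0 \<le> Im s1" "0 \<le> Im s2"
    using quadratic_root_Im_nonneg assms(2,3,5) by blast+
  define q1 where "q1 = pderiv q - smult s1 q"
  have "lower_rooted q1"
    unfolding q1_def
    using lower_rooted_pderiv_minus_smult \<open>lower_rooted q\<close> \<open>0 \<le> Im s1\<close> \<open>0 < degree q\<close>
    by simp
  show ?thesis
  proof
    assume "poly (map_poly of_real (legendre_op \<beta> p)) z = 0"
    then have "poly (pderiv q1) z = s2 * poly q1 z"
      using poly_legendre_op_factor[OF sum prod] \<open>z\<^sup>2 - 1 \<noteq> 0\<close> by (simp add: q1_def q_def)
    then have "s2 = 0" "degree q1 = 0"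
      using lower_rooted_pderiv_eq_scaled \<open>lower_rooted q1\<close> \<open>0 \<le> Im s2\<close> assms(5) by blast+
    \<comment> \<open>Then \<open>\<beta> = 0\<close> and \<open>s1 = -2z/(z\<^sup>2 - 1) \<noteq> 0\<close>,
      so \<open>q1\<close> has the positive degree of \<open>q\<close>.\<close>
    then have "s1 \<noteq> 0"
      using sum assms(5) by auto
    then show False
      using \<open>degree q1 = 0\<close> \<open>0 < degree q\<close> degree_pderiv_minus_smult[of s1 q]
      by (simp add: q1_def)
  qed
qed

lemma only_real_zeros_if_upper_root_free:
  assumes "\<And>z. 0 < Im z \<Longrightarrow> poly (map_poly of_real p) z \<noteq> 0"
  shows "only_real_zeros p"
  unfolding only_real_zeros_def
proof (intro disjI2 allI impI)
  fix z :: complex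
  assume z: "poly (map_poly of_real p) z = 0"
  then have "poly (map_poly of_real p) (cnj z) = 0"
    by (subst real_poly_cnj_root_iff) (auto simp: coeff_map_poly)
  then show "Im z = 0"
    using z assms[of z] assms[of "cnj z"] by (cases "Im z" rule: linorder_cases) auto
qed

lemma legendre_op_only_real_zeros:
  assumes "only_real_zeros p" "0 \<le> \<beta>" "\<beta> \<le> 1"
  shows "only_real_zeros (legendre_op \<beta> p)"
proof (cases "legendre_op \<beta> p = 0")
  case False
  then show ?thesis
    using poly_legendre_op_neq_0_upper[OF assms] by (intro only_real_zeros_if_upper_root_free)
qed (simp add: only_real_zeros_def)

theorem proposition4p9:
  fixes \<alpha> \<beta> :: real
  assumes "\<alpha> = 1" and "0 \<le> \<beta>" and "\<beta> \<le> 1"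
  shows "legendre_multiplier_sequence (\<lambda>k. real k ^ 2 + \<alpha> * real k + \<beta>)"
  unfolding legendre_multiplier_sequence_def
proof (intro allI impI)
  fix n and a :: "nat \<Rightarrow> real"
  assume "only_real_zeros (\<Sum>k\<le>n. smult (a k) (legendre k))"
  then have "only_real_zeros (legendre_op \<beta> (\<Sum>k\<le>n. smult (a k) (legendre k)))"
    using assms(2,3) by (rule legendre_op_only_real_zeros)
  then show "only_real_zeros (\<Sum>k\<le>n. smult (a k * (real k ^ 2 + \<alpha> * real k + \<beta>)) (legendre k))"
    by (simp add: assms(1) legendre_op_sum_legendre)
qed

end
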